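(* Let $f(x)=\frac1n\sum_{i=1}^n f_i(x)$ where each $f_i:\mathbb{R}^d\to\mathbb{R}$ has Lipschitz continuous gradient with constant $L_{f,i}$, and let $M=\max_i L_{f,i}$ and $r=\frac{2}{1-c_2}$. In the First-Order Stochastic Trust-Region Method described in the context, if at iteration $k$ we have $g_k\neq 0$ and \[ \Delta_k\le\frac{\|g_k\|}{rM}, \] then $\Delta_{k+1}=\min(\nu_2\Delta_k,\bar\Delta)$.
   Context: First-Order Stochastic Trust-Region Method: parameters $\bar\Delta>0$, $\Delta_0\in(0,\bar\Delta)$, $0<c_0\le c_1\le c_2<1$, $\nu_1,\nu_2>1$. At iteration $k$: sample an index $i\in\{1,\dots,n\}$, set $g_k=\nabla f_i(x_k)$; $m_k(p)=g_k^\top p+\frac12\|p\|^2$; $p_k=\arg\min_{\|p\|\le\Delta_k}m_k(p)=-a_kg_k$ with $a_k=1$ if $\|g_k\|\le\Delta_k$ and $a_k=\Delta_k/\|g_k\|$ otherwise; $r_k=\frac{f_i(x_k)-f_i(x_k+p_k)}{m_k(0)-m_k(p_k)}$; $x_{k+1}=x_k+p_k$ if $r_k>c_0$, else $x_{k+1}=x_k$; $\Delta_{k+1}=\Delta_k/\nu_1$ if $r_k<c_1$, $\min(\nu_2\Delta_k,\bar\Delta)$ if $r_k>c_2$, $\Delta_k$ otherwise. *)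

theory Defs
  imports "HOL-Analysis.Analysis"
begin

definition is_gradient :: "('a::real_inner \<Rightarrow> real) \<Rightarrow> ('a \<Rightarrow> 'a) \<Rightarrow> bool" where
  "is_gradient h G \<longleftrightarrow> (\<forall>x. (h has_derivative (\<lambda>v. G x \<bullet> v)) (at x))"

definition tr_model :: "'a::real_inner \<Rightarrow> 'a \<Rightarrow> real" where
  "tr_model g p = g \<bullet> p + (1/2) * (norm p)^2"

definition tr_a :: "'a::real_normed_vector \<Rightarrow> real \<Rightarrow> real" where
  "tr_a g \<Delta> = (if norm g \<le> \<Delta> then 1 else \<Delta> / norm g)"

definition tr_step :: "'a::real_normed_vector \<Rightarrow> real \<Rightarrow> 'a" where
  "tr_step g \<Delta> = - (tr_a g \<Delta>) *\<^sub>R g"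

definition tr_ratio :: "('a::real_inner \<Rightarrow> real) \<Rightarrow> ('a \<Rightarrow> 'a) \<Rightarrow> 'a \<Rightarrow> real \<Rightarrow> real" where
  "tr_ratio fi Gi x \<Delta> =
     (let g = Gi x; p = tr_step g \<Delta>
      in (fi x - fi (x + p)) / (tr_model g 0 - tr_model g p))"

definition tr_update ::
  "real \<Rightarrow> real \<Rightarrow> real \<Rightarrow> real \<Rightarrow> real \<Rightarrow> real \<Rightarrow>
   ('a::real_inner \<Rightarrow> real) \<Rightarrow> ('a \<Rightarrow> 'a) \<Rightarrow> 'a \<times> real \<Rightarrow> 'a \<times> real" where
  "tr_update Dbar c0 c1 c2 nu1 nu2 fi Gi s =
     (let x = fst s; \<Delta> = snd s; g = Gi x; p = tr_step g \<Delta>; \<rho> = tr_ratio fi Gi x \<Delta>;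
          x' = (if \<rho> > c0 then x + p else x);
          \<Delta>' = (if \<rho> < c1 then \<Delta> / nu1 else if \<rho> > c2 then min (nu2 * \<Delta>) Dbar else \<Delta>)
      in (x', \<Delta>'))"

text \<open>The iterates \<open>(x_k, \<Delta>_k)\<close>: \<open>f i\<close> are the component functions, \<open>G i\<close> their gradients,
  \<open>idx k\<close> the index sampled at iteration \<open>k\<close>.\<close>
primrec tr_iter ::
  "real \<Rightarrow> real \<Rightarrow> real \<Rightarrow> real \<Rightarrow> real \<Rightarrow> real \<Rightarrow>
   (nat \<Rightarrow> 'a::real_inner \<Rightarrow> real) \<Rightarrow> (nat \<Rightarrow> 'a \<Rightarrow> 'a) \<Rightarrow> (nat \<Rightarrow> nat) \<Rightarrow>
   'a \<Rightarrow> real \<Rightarrow> nat \<Rightarrow> 'a \<times> real" where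
  "tr_iter Dbar c0 c1 c2 nu1 nu2 f G idx x0 D0 0 = (x0, D0)"
| "tr_iter Dbar c0 c1 c2 nu1 nu2 f G idx x0 D0 (Suc k) =
     tr_update Dbar c0 c1 c2 nu1 nu2 (f (idx k)) (G (idx k))
       (tr_iter Dbar c0 c1 c2 nu1 nu2 f G idx x0 D0 k)"

end

theory Submission
  imports Defs
begin

text \<open>With \<open>a = tr_a g \<Delta>\<close> and \<open>g \<noteq> 0\<close>, the model decrease is \<open>a \<parallel>g\<parallel>\<^sup>2 (1 - a/2)\<close> while the
  descent lemma bounds the actual decrease of the sampled component below by
  \<open>a \<parallel>g\<parallel>\<^sup>2 (1 - L a/2)\<close>, so the ratio is at least \<open>1 - L a/2\<close>. Since \<open>a \<le> \<Delta>/\<parallel>g\<parallel>\<close>, the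
  hypothesis \<open>\<Delta> \<le> \<parallel>g\<parallel>/(r M)\<close> gives \<open>L a \<le> (1 - c\<^sub>2)/2\<close>, hence a ratio of at least
  \<open>(3 + c\<^sub>2)/4 > c\<^sub>2\<close>: the iteration is very successful and the radius expands.\<close>

lemma is_gradient_along_line:
  assumes "is_gradient h Gh"
  shows "((\<lambda>t. h (x + t *\<^sub>R p)) has_real_derivative (Gh (x + t *\<^sub>R p) \<bullet> p)) (at t)"
proof -
  have line: "((\<lambda>t. x + t *\<^sub>R p) has_derivative (\<lambda>s. s *\<^sub>R p)) (at t)"
    by (auto intro!: derivative_eq_intros)
  have "(h has_derivative (\<lambda>v. Gh (x + t *\<^sub>R p) \<bullet> v)) (at (x + t *\<^sub>R p))"
    using assms unfolding is_gradient_def by blast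
  from has_derivative_compose[OF line this]
  have "((\<lambda>t. h (x + t *\<^sub>R p)) has_derivative (\<lambda>s. Gh (x + t *\<^sub>R p) \<bullet> (s *\<^sub>R p))) (at t)"
    by (simp add: o_def)
  moreover have "(\<lambda>s. Gh (x + t *\<^sub>R p) \<bullet> (s *\<^sub>R p)) = (*) (Gh (x + t *\<^sub>R p) \<bullet> p)"
    by (auto simp: algebra_simps)
  ultimately show ?thesis
    by (simp add: has_field_derivative_def)
qed

lemma descent_lemma:
  fixes h :: "'a::real_inner \<Rightarrow> real"
  assumes grad: "is_gradient h Gh" and lip: "L-lipschitz_on UNIV Gh"
  shows "h (x + p) \<le> h x + Gh x \<bullet> p + L / 2 * (norm p)\<^sup>2"
proof -
  define \<psi> where "\<psi> t = h x + t * (Gh x \<bullet> p) + L / 2 * t\<^sup>2 * (norm p)\<^sup>2 - h (x + t *\<^sub>R p)" for t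
  have \<psi>_deriv: "(\<psi> has_real_derivative
      (Gh x \<bullet> p + L * t * (norm p)\<^sup>2 - Gh (x + t *\<^sub>R p) \<bullet> p)) (at t)" for t
    unfolding \<psi>_def
    by (rule is_gradient_along_line[OF grad] derivative_eq_intros refl | simp)+
  have \<psi>_deriv_nonneg: "0 \<le> Gh x \<bullet> p + L * t * (norm p)\<^sup>2 - Gh (x + t *\<^sub>R p) \<bullet> p"
    if "t \<in> {0..1}" for t
  proof -
    have "(Gh (x + t *\<^sub>R p) - Gh x) \<bullet> p \<le> norm (Gh (x + t *\<^sub>R p) - Gh x) * norm p"
      by (rule norm_cauchy_schwarz)
    also have "\<dots> \<le> L * norm (t *\<^sub>R p) * norm p"
      using lipschitz_on_normD[OF lip, of "x + t *\<^sub>R p" x] by (simp add: mult_right_mono)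
    also have "\<dots> = L * t * (norm p)\<^sup>2"
      using that by (simp add: power2_eq_square)
    finally show ?thesis
      by (simp add: inner_diff_left)
  qed
  have "\<psi> 0 \<le> \<psi> 1"
    by (rule deriv_nonneg_imp_mono[OF \<psi>_deriv \<psi>_deriv_nonneg]) auto
  then show ?thesis
    by (simp add: \<psi>_def)
qed

lemma tr_a_pos: "0 < \<Delta> \<Longrightarrow> 0 < tr_a g \<Delta>"
  by (auto simp: tr_a_def intro!: divide_pos_pos)

lemma tr_a_le_one: "tr_a g \<Delta> \<le> 1"
  by (simp add: tr_a_def divide_le_eq_1)

lemma norm_mult_tr_a_le: "0 \<le> \<Delta> \<Longrightarrow> norm g * tr_a g \<Delta> \<le> \<Delta>"
  by (simp add: tr_a_def)

lemma tr_model_decrease: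
  "tr_model g 0 - tr_model g (tr_step g \<Delta>) = tr_a g \<Delta> * (norm g)\<^sup>2 * (1 - tr_a g \<Delta> / 2)"
  by (simp add: tr_model_def tr_step_def dot_square_norm power2_eq_square algebra_simps)

lemma tr_actual_decrease_ge:
  fixes fi :: "'a::real_inner \<Rightarrow> real" and x :: 'a and \<Delta> :: real
  assumes "is_gradient fi Gi" "L-lipschitz_on UNIV Gi"
  defines "g \<equiv> Gi x" and "a \<equiv> tr_a (Gi x) \<Delta>"
  shows "a * (norm g)\<^sup>2 * (1 - L * a / 2) \<le> fi x - fi (x + tr_step g \<Delta>)"
  using descent_lemma[OF assms(1,2), of x "tr_step g \<Delta>"]
  by (simp add: g_def a_def tr_step_def dot_square_norm power2_eq_square algebra_simps)

lemma tr_ratio_ge: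
  fixes fi :: "'a::real_inner \<Rightarrow> real" and x :: 'a and \<Delta> :: real
  assumes grad: "is_gradient fi Gi" and lip: "L-lipschitz_on UNIV Gi"
    and "Gi x \<noteq> 0" "0 < \<Delta>"
  defines "a \<equiv> tr_a (Gi x) \<Delta>"
  shows "(1 - L * a / 2) / (1 - a / 2) \<le> tr_ratio fi Gi x \<Delta>"
proof -
  define g where "g = Gi x"
  have "0 < a" "a \<le> 1"
    using tr_a_pos[OF \<open>0 < \<Delta>\<close>] tr_a_le_one by (auto simp: a_def)
  then have model_pos: "0 < a * (norm g)\<^sup>2 * (1 - a / 2)"
    using \<open>Gi x \<noteq> 0\<close> by (simp add: g_def)
  then have "a * (norm g)\<^sup>2 \<noteq> 0"
    by auto
  then have "(1 - L * a / 2) / (1 - a / 2)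
      = a * (norm g)\<^sup>2 * (1 - L * a / 2) / (a * (norm g)\<^sup>2 * (1 - a / 2))"
    by (rule mult_divide_mult_cancel_left[symmetric])
  also have "\<dots> \<le> (fi x - fi (x + tr_step g \<Delta>)) / (a * (norm g)\<^sup>2 * (1 - a / 2))"
    using tr_actual_decrease_ge[OF grad lip, of x \<Delta>] model_pos
    by (intro divide_right_mono) (simp_all add: g_def a_def)
  also have "\<dots> = tr_ratio fi Gi x \<Delta>"
    by (simp add: tr_ratio_def Let_def tr_model_decrease g_def a_def)
  finally show ?thesis .
qed

lemma tr_ratio_gt:
  assumes grad: "is_gradient fi Gi" and lip: "L-lipschitz_on UNIV Gi"
    and "Gi x \<noteq> 0" "0 < \<Delta>" "0 \<le> c" "c < 1"
    and small_radius: "L * \<Delta> \<le> (1 - c) / 2 * norm (Gi x)"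
  shows "c < tr_ratio fi Gi x \<Delta>"
proof -
  define a where "a = tr_a (Gi x) \<Delta>"
  have "0 < a" "a \<le> 1"
    using tr_a_pos[OF \<open>0 < \<Delta>\<close>] tr_a_le_one by (auto simp: a_def)
  have "L * (norm (Gi x) * a) \<le> L * \<Delta>"
    using norm_mult_tr_a_le[of \<Delta> "Gi x"] lipschitz_on_nonneg[OF lip] \<open>0 < \<Delta>\<close>
    by (simp add: a_def mult_left_mono)
  with small_radius have "norm (Gi x) * (L * a) \<le> norm (Gi x) * ((1 - c) / 2)"
    by (simp add: algebra_simps)
  then have La: "L * a \<le> (1 - c) / 2"
    using \<open>Gi x \<noteq> 0\<close> by (simp add: mult_le_cancel_left_pos)
  have "c < 1 - (1 - c) / 4"
    using \<open>c < 1\<close> by (simp add: field_simps)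
  also have "\<dots> \<le> 1 - L * a / 2"
    using La by simp
  also have "\<dots> \<le> (1 - L * a / 2) / (1 - a / 2)"
    using \<open>0 < a\<close> \<open>a \<le> 1\<close> La \<open>0 \<le> c\<close> by (simp add: le_divide_eq mult_left_le)
  also have "\<dots> \<le> tr_ratio fi Gi x \<Delta>"
    using tr_ratio_ge[OF grad lip \<open>Gi x \<noteq> 0\<close> \<open>0 < \<Delta>\<close>] by (simp add: a_def)
  finally show ?thesis .
qed

lemma tr_update_radius_expands:
  assumes "c1 \<le> c2" "c2 < tr_ratio fi Gi (fst s) (snd s)"
  shows "snd (tr_update Dbar c0 c1 c2 nu1 nu2 fi Gi s) = min (nu2 * snd s) Dbar"
  using assms by (simp add: tr_update_def Let_def)

lemma tr_iter_radius_pos: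
  assumes "0 < D0" "1 < nu1" "0 < Dbar" "1 < nu2"
  shows "0 < snd (tr_iter Dbar c0 c1 c2 nu1 nu2 f G idx x0 D0 k)"
  using assms by (induction k) (auto simp: tr_update_def Let_def)

theorem lemma4p4:
  fixes f :: "nat \<Rightarrow> 'a::euclidean_space \<Rightarrow> real"
    and G :: "nat \<Rightarrow> 'a \<Rightarrow> 'a"
    and L :: "nat \<Rightarrow> real"
    and n :: nat
    and idx :: "nat \<Rightarrow> nat"
    and x0 :: 'a
    and Dbar D0 c0 c1 c2 nu1 nu2 :: real
    and k :: nat
  assumes n: "n \<ge> 1"
    and grad: "\<And>i. i \<in> {1..n} \<Longrightarrow> is_gradient (f i) (G i)"
    and lip: "\<And>i. i \<in> {1..n} \<Longrightarrow> (L i)-lipschitz_on UNIV (G i)"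
    and samp: "\<And>j. idx j \<in> {1..n}"
    and Dbar: "Dbar > 0"
    and D0: "0 < D0" "D0 < Dbar"
    and c: "0 < c0" "c0 \<le> c1" "c1 \<le> c2" "c2 < 1"
    and nu: "nu1 > 1" "nu2 > 1"
    and gk: "G (idx k) (fst (tr_iter Dbar c0 c1 c2 nu1 nu2 f G idx x0 D0 k)) \<noteq> 0"
    and Dk: "snd (tr_iter Dbar c0 c1 c2 nu1 nu2 f G idx x0 D0 k)
               * (2 / (1 - c2)) * Max (L ` {1..n})
             \<le> norm (G (idx k) (fst (tr_iter Dbar c0 c1 c2 nu1 nu2 f G idx x0 D0 k)))"
  shows "snd (tr_iter Dbar c0 c1 c2 nu1 nu2 f G idx x0 D0 (Suc k))
         = min (nu2 * snd (tr_iter Dbar c0 c1 c2 nu1 nu2 f G idx x0 D0 k)) Dbar"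
proof -
  define s where "s = tr_iter Dbar c0 c1 c2 nu1 nu2 f G idx x0 D0 k"
  define i where "i = idx k"
  have i: "i \<in> {1..n}"
    using samp by (simp add: i_def)
  have \<Delta>_pos: "0 < snd s"
    using tr_iter_radius_pos[OF D0(1) nu(1) Dbar nu(2)] by (simp add: s_def)
  define M where "M = Max (L ` {1..n})"
  have "L i * snd s \<le> M * snd s"
    using i \<Delta>_pos by (simp add: M_def)
  also have "\<dots> \<le> (1 - c2) / 2 * norm (G i (fst s))"
    using Dk c(4) by (simp add: s_def i_def M_def field_simps)
  finally have small_radius: "L i * snd s \<le> (1 - c2) / 2 * norm (G i (fst s))" .
  have "c2 < tr_ratio (f i) (G i) (fst s) (snd s)"
    using tr_ratio_gt[OF grad[OF i] lip[OF i] gk[folded s_def i_def] \<Delta>_pos _ c(4) small_radius] c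
    by simp
  then show ?thesis
    using tr_update_radius_expands[OF c(3)] by (simp add: s_def i_def)
qed

end
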